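(* Let $d\ge2$, $p\in(2,2^* )$, $\theta\in[\vartheta(p,d),1]$ and $\Lambda>0$. Let $u\in H^1(\mathcal C)\setminus\{0\}$ satisfy $\mathcal Q^\theta_\Lambda[u]=\mathsf K_{\rm CKN}(\theta,p,\Lambda)$ and $\|u\|_2^2=\frac{\theta}{t+\Lambda}\|u\|_p^p$, where $t=\|\nabla u\|_2^2/\|u\|_2^2$, and assume $u$ solves $-\Delta u+\mu u=u^{p-1}$ on $\mathcal C$ with $\theta\mu=(1-\theta)t+\Lambda$. Then $\mathcal Q^1_\mu[u]\le\mathsf K^*_{\rm CKN}(1,p,\mu)$.
   Context: $2^*=\infty$ if $d=2$, $2^*=2d/(d-2)$ if $d\ge3$; $\vartheta(p,d)=\frac{d(p-2)}{2p}$. $\mathcal C=\mathbb R\times S^{d-1}$ with points $(s,\omega)$ and measure $d\mu=|S^{d-1}|^{-1}d\omega\,ds$; $\Delta$ is the Laplace–Beltrami operator on $\mathcal C$; $\|u\|_q=(\int_{\mathcal C}|u|^qd\mu)^{1/q}$. $\mathcal Q^\theta_\Lambda[u]=\frac{(\|\nabla u\|_2^2+\Lambda\|u\|_2^2)^\theta\|u\|_2^{2(1-\theta)}}{\|u\|_p^2}$; $\mathsf K_{\rm CKN}(\theta,p,\Lambda)=\inf_{u\ne0}\mathcal Q^\theta_\Lambda[u]$; $\mathsf K^*_{\rm CKN}(\theta,p,\Lambda)$ is the same infimum over functions depending only on $s$, equal to $\big[\tfrac{2p\theta+2-p}{(p-2)^2}\big]^{\frac{p-2}{2p}}\big[\tfrac{2p\theta}{2p\theta+2-p}\big]^{\theta}\big[\tfrac{p+2}{4}\big]^{\frac{6-p}{2p}}\Big[\tfrac{\sqrt\pi\,\Gamma(\frac2{p-2})}{\Gamma(\frac2{p-2}+\frac12)}\Big]^{\frac{p-2}{p}}\Lambda^{\theta-\frac{p-2}{2p}}$.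 *)

theory Defs
  imports "HOL-Analysis.Analysis"
begin

text \<open>
  The cylinder C = R x S^{d-1} (d = CARD('n)) is represented through the conformal
  diffeomorphism (s,w) |-> e^s w onto R^d minus the origin.  A function
  u :: real => real^'n => real on C (only values with w on the unit sphere matter)
  corresponds to U y = u (ln |y|) (y / |y|).  Under this map
    d mu = |S^{d-1}|^{-1} |y|^{-d} dy   and   |grad_C u|^2 = |y|^2 |grad_y U|^2.
\<close>

definition to_euclid :: "(real \<Rightarrow> real^'n \<Rightarrow> real) \<Rightarrow> real^'n \<Rightarrow> real" where
  "to_euclid u y = u (ln (norm y)) (y /\<^sub>R norm y)"

definition sphere_area :: "'n::finite itself \<Rightarrow> real" where
  "sphere_area _ = real CARD('n) * measure lebesgue (ball (0::real^'n) 1)"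

definition cyl_measure :: "(real^'n::finite) measure" where
  "cyl_measure = density lebesgue
     (\<lambda>y. ennreal (if y = 0 then 0 else 1 / (sphere_area TYPE('n) * norm y ^ CARD('n))))"

definition test_fn :: "(real^'n::finite \<Rightarrow> real) \<Rightarrow> (real^'n \<Rightarrow> real^'n) \<Rightarrow> bool" where
  "test_fn \<phi> D\<phi> \<longleftrightarrow>
     (\<forall>y. (\<phi> has_derivative (\<lambda>h. D\<phi> y \<bullet> h)) (at y)) \<and> continuous_on UNIV D\<phi> \<and>
     compact (closure {y. \<phi> y \<noteq> 0}) \<and> 0 \<notin> closure {y. \<phi> y \<noteq> 0}"

definition weak_grad :: "(real^'n::finite \<Rightarrow> real) \<Rightarrow> (real^'n \<Rightarrow> real^'n) \<Rightarrow> bool" where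
  "weak_grad U G \<longleftrightarrow>
     (\<forall>K. compact K \<and> 0 \<notin> K \<longrightarrow> set_integrable lebesgue K U \<and> set_integrable lebesgue K G) \<and>
     (\<forall>\<phi> D\<phi>. test_fn \<phi> D\<phi> \<longrightarrow>
        (\<forall>i. (\<integral>y. U y * D\<phi> y $ i \<partial>lebesgue) = - (\<integral>y. G y $ i * \<phi> y \<partial>lebesgue)))"

definition H1_cyl :: "(real \<Rightarrow> real^'n::finite \<Rightarrow> real) \<Rightarrow> bool" where
  "H1_cyl u \<longleftrightarrow> (\<exists>G. weak_grad (to_euclid u) G \<and>
      integrable cyl_measure (\<lambda>y. (to_euclid u y)^2) \<and>
      integrable cyl_measure (\<lambda>y. norm y ^ 2 * norm (G y) ^ 2))"

text \<open>The (a.e. unique) weak gradient, expressed in the y-variables.\<close>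
definition grad_cyl :: "(real \<Rightarrow> real^'n::finite \<Rightarrow> real) \<Rightarrow> real^'n \<Rightarrow> real^'n" where
  "grad_cyl u = (SOME G. weak_grad (to_euclid u) G)"

definition Lnorm :: "real \<Rightarrow> (real \<Rightarrow> real^'n::finite \<Rightarrow> real) \<Rightarrow> real" where
  "Lnorm q u = (\<integral>y. \<bar>to_euclid u y\<bar> powr q \<partial>cyl_measure) powr (1 / q)"

definition grad_sq :: "(real \<Rightarrow> real^'n::finite \<Rightarrow> real) \<Rightarrow> real" where
  "grad_sq u = (\<integral>y. norm y ^ 2 * norm (grad_cyl u y) ^ 2 \<partial>cyl_measure)"

definition QCKN :: "real \<Rightarrow> real \<Rightarrow> real \<Rightarrow> (real \<Rightarrow> real^'n::finite \<Rightarrow> real) \<Rightarrow> real" where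
  "QCKN \<theta> p \<Lambda> u =
     (grad_sq u + \<Lambda> * (Lnorm 2 u)^2) powr \<theta> * (Lnorm 2 u) powr (2 * (1 - \<theta>)) / (Lnorm p u)^2"

definition nonzero_cyl :: "(real \<Rightarrow> real^'n::finite \<Rightarrow> real) \<Rightarrow> bool" where
  "nonzero_cyl u \<longleftrightarrow> \<not> (AE y in lebesgue. to_euclid u y = 0)"

definition KCKN :: "'n::finite itself \<Rightarrow> real \<Rightarrow> real \<Rightarrow> real \<Rightarrow> real" where
  "KCKN _ \<theta> p \<Lambda> = (INF u \<in> {u :: real \<Rightarrow> real^'n \<Rightarrow> real. H1_cyl u \<and> nonzero_cyl u}. QCKN \<theta> p \<Lambda> u)"

definition s_only :: "(real \<Rightarrow> real^'n::finite \<Rightarrow> real) \<Rightarrow> bool" where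
  "s_only u \<longleftrightarrow> (\<forall>s w w'. norm w = 1 \<and> norm w' = 1 \<longrightarrow> u s w = u s w')"

definition KCKN_star :: "'n::finite itself \<Rightarrow> real \<Rightarrow> real \<Rightarrow> real \<Rightarrow> real" where
  "KCKN_star _ \<theta> p \<Lambda> =
     (INF u \<in> {u :: real \<Rightarrow> real^'n \<Rightarrow> real. H1_cyl u \<and> nonzero_cyl u \<and> s_only u}. QCKN \<theta> p \<Lambda> u)"

definition subcritical :: "nat \<Rightarrow> real \<Rightarrow> bool" where
  "subcritical d p \<longleftrightarrow> 2 < p \<and> (d \<ge> 3 \<longrightarrow> p < 2 * real d / (real d - 2))"

definition vartheta :: "real \<Rightarrow> nat \<Rightarrow> real" where
  "vartheta p d = real d * (p - 2) / (2 * p)"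

text \<open>Weak formulation of  -Delta u + mu u = u^{p-1}  on C (u^{p-1} read as |u|^{p-2} u).\<close>
definition weak_solution :: "real \<Rightarrow> real \<Rightarrow> (real \<Rightarrow> real^'n::finite \<Rightarrow> real) \<Rightarrow> bool" where
  "weak_solution \<mu> p u \<longleftrightarrow>
     (\<forall>\<phi> D\<phi>. test_fn \<phi> D\<phi> \<longrightarrow>
        (\<integral>y. norm y ^ 2 * (grad_cyl u y \<bullet> D\<phi> y) + \<mu> * to_euclid u y * \<phi> y \<partial>cyl_measure)
        = (\<integral>y. \<bar>to_euclid u y\<bar> powr (p - 2) * to_euclid u y * \<phi> y \<partial>cyl_measure))"

end

theory Submission
  imports Defs
begin

text \<open>
  Put \<open>k = t + \<Lambda>\<close>. Since \<open>\<theta> \<Lambda> + (1 - \<theta>) k = \<theta> \<mu>\<close>, Young's inequality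
  \<open>a\<^sup>\<theta> b\<^sup>1\<^sup>-\<^sup>\<theta> \<le> k\<^sup>\<theta> (\<theta> a / k + (1 - \<theta>) b)\<close>, applied to
  \<open>a = \<parallel>\<nabla>w\<parallel>\<^sub>2\<^sup>2 + \<Lambda> \<parallel>w\<parallel>\<^sub>2\<^sup>2\<close> and \<open>b = \<parallel>w\<parallel>\<^sub>2\<^sup>2\<close>, gives
  \<open>Q\<^sup>\<theta>\<^sub>\<Lambda>[w] \<le> \<theta> k\<^sup>\<theta>\<^sup>-\<^sup>1 Q\<^sup>1\<^sub>\<mu>[w]\<close> for every \<open>w\<close>, with equality for \<open>w = u\<close>
  because \<open>t\<close> is the quotient \<open>\<parallel>\<nabla>u\<parallel>\<^sub>2\<^sup>2 / \<parallel>u\<parallel>\<^sub>2\<^sup>2\<close> of \<open>u\<close> itself.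
  Hence the minimiser \<open>u\<close> of \<open>Q\<^sup>\<theta>\<^sub>\<Lambda>\<close> also minimises \<open>Q\<^sup>1\<^sub>\<mu>\<close>, in particular
  against all functions of \<open>s\<close> alone. That this class is not empty (otherwise the
  infimum defining \<open>K\<^sup>*\<close> is a junk value) is witnessed by a \<open>C\<^sup>1\<close> function of
  \<open>e\<^sup>2\<^sup>s\<close>, i.e. a radial bump supported in an annulus of \<open>\<real>\<^sup>d\<close>; its classical
  gradient is a weak gradient because integrals of derivatives of compactly supported
  \<open>C\<^sup>1\<close> functions vanish.
\<close>

lemma integrable_compact_support:
  fixes g :: "'a::euclidean_space \<Rightarrow> 'b::{banach, second_countable_topology}"
  assumes "continuous_on K g" "compact K" "\<And>y. y \<notin> K \<Longrightarrow> g y = 0"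
  shows "integrable lborel g" "integrable lebesgue g"
proof -
  have "(\<lambda>x. indicator K x *\<^sub>R g x) = g"
    using assms(3) by (auto simp: indicator_def fun_eq_iff)
  then show lb: "integrable lborel g"
    using borel_integrable_compact[OF assms(2,1)] by simp
  show "integrable lebesgue g"
    using integrable_completion[OF borel_measurable_integrable[OF lb]] lb by simp
qed

lemma integral_cbox_compact_support:
  fixes g :: "'a::euclidean_space \<Rightarrow> real"
  assumes "continuous_on UNIV g" "compact K" "\<And>y. y \<notin> K \<Longrightarrow> g y = 0" "K \<subseteq> cbox a b"
  shows "integral (cbox a b) g = integral\<^sup>L lborel g"
proof -
  have "integral (cbox a b) g = integral UNIV (\<lambda>x. if x \<in> cbox a b then g x else 0)"
    by (rule integral_restrict_UNIV[symmetric])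
  also have "(\<lambda>x. if x \<in> cbox a b then g x else 0) = g"
    using assms(3,4) by (auto simp: fun_eq_iff)
  finally show ?thesis
    using integral_lborel integrable_compact_support(1)[OF continuous_on_subset[OF assms(1)] assms(2,3)]
    by simp
qed

lemma gradient_eq_0_outside_support:
  fixes f :: "'a::real_inner \<Rightarrow> real"
  assumes "(f has_derivative (\<lambda>h. Df \<bullet> h)) (at y)"
    and "closed S" "\<And>y. y \<notin> S \<Longrightarrow> f y = 0" "y \<notin> S"
  shows "Df = 0"
proof -
  have "((\<lambda>_. 0) has_derivative (\<lambda>h. Df \<bullet> h)) (at y)"
    by (rule has_derivative_transform_within_open[OF assms(1), where s="- S"])
       (use assms in auto)
  then have "(\<lambda>h. Df \<bullet> h) = (\<lambda>h. 0)"
    by (rule has_derivative_unique) simp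
  then show ?thesis
    by (metis inner_eq_zero_iff)
qed

lemma has_field_derivative_integral_shift:
  fixes f :: "'a::euclidean_space \<Rightarrow> real" and Df :: "'a \<Rightarrow> 'a"
  assumes der: "\<And>y. (f has_derivative (\<lambda>h. Df y \<bullet> h)) (at y)"
    and cont: "continuous_on UNIV Df"
  shows "((\<lambda>h. integral (cbox a b) (\<lambda>y. f (y + h *\<^sub>R e))) has_field_derivative
           integral (cbox a b) (\<lambda>y. Df y \<bullet> e)) (at 0)"
proof -
  define U :: "real set" where "U = {-1<..<1}"
  have fcont: "continuous_on UNIV f"
    using has_derivative_continuous[OF der] by (simp add: continuous_on_eq_continuous_at)
  have "((\<lambda>h. integral (cbox a b) (\<lambda>y. f (y + h *\<^sub>R e))) has_field_derivative
          integral (cbox a b) (\<lambda>y. Df (y + 0 *\<^sub>R e) \<bullet> e)) (at 0 within U)"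
  proof (rule leibniz_rule_field_derivative[where fx="\<lambda>h y. Df (y + h *\<^sub>R e) \<bullet> e"])
    fix h y
    have "((\<lambda>h. f (y + h *\<^sub>R e)) has_derivative (\<lambda>k. Df (y + h *\<^sub>R e) \<bullet> (0 + k *\<^sub>R e))) (at h within U)"
      by (rule has_derivative_compose[OF _ der, where f="\<lambda>h. y + h *\<^sub>R e", unfolded o_def])
         (auto intro!: derivative_eq_intros)
    moreover have "(\<lambda>k. Df (y + h *\<^sub>R e) \<bullet> (0 + k *\<^sub>R e)) = (*) (Df (y + h *\<^sub>R e) \<bullet> e)"
      by (auto simp: fun_eq_iff)
    ultimately show "((\<lambda>h. f (y + h *\<^sub>R e)) has_field_derivative Df (y + h *\<^sub>R e) \<bullet> e) (at h within U)"
      by (simp add: has_field_derivative_def)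
  next
    show "(\<lambda>y. f (y + h *\<^sub>R e)) integrable_on cbox a b" for h
      by (intro integrable_continuous continuous_on_compose2[OF fcont] continuous_intros) auto
  next
    show "continuous_on (U \<times> cbox a b) (\<lambda>(h, y). Df (y + h *\<^sub>R e) \<bullet> e)"
      by (auto simp: split_beta intro!: continuous_on_compose2[OF cont] continuous_intros)
  qed (auto simp: U_def)
  moreover have "at 0 within U = at 0"
    by (rule at_within_open) (auto simp: U_def)
  ultimately show ?thesis
    by simp
qed

text \<open>The integral of a compactly supported function is invariant under translation,
  so differentiating under the integral sign in the direction of the shift gives zero.\<close>

lemma integral_derivative_compact_support:
  fixes f :: "'a::euclidean_space \<Rightarrow> real" and Df :: "'a \<Rightarrow> 'a"
  assumes der: "\<And>y. (f has_derivative (\<lambda>h. Df y \<bullet> h)) (at y)"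
    and cont: "continuous_on UNIV Df"
    and S: "compact S" and supp: "\<And>y. y \<notin> S \<Longrightarrow> f y = 0"
  shows "(\<integral>y. Df y \<bullet> e \<partial>lebesgue) = 0"
proof -
  have fcont: "continuous_on UNIV f"
    using has_derivative_continuous[OF der] by (simp add: continuous_on_eq_continuous_at)
  obtain R where R: "S \<subseteq> cball 0 R"
    using bounded_subset_ballD[OF compact_imp_bounded[OF S], of 0] ball_subset_cball by blast
  obtain a :: 'a where B: "cball 0 (R + norm e) \<subseteq> cbox (-a) a"
    using bounded_subset_cbox_symmetric[of "cball 0 (R + norm e)"] by auto
  have shift_supp: "f (y + h *\<^sub>R e) = 0" if "\<bar>h\<bar> < 1" "y \<notin> cbox (-a) a" for h y
  proof -
    have "norm (h *\<^sub>R e) \<le> norm e"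
      using that(1) by (simp add: mult_left_le_one_le)
    moreover have "norm y > R + norm e"
      using B that(2) mem_cball_0 by (meson not_le subsetD)
    ultimately have "norm (y + h *\<^sub>R e) > R"
      using norm_triangle_ineq4[of "y + h *\<^sub>R e" "h *\<^sub>R e"] by simp
    then show ?thesis
      using R supp mem_cball_0 by (meson not_le subsetD)
  qed
  have shift_const: "integral (cbox (-a) a) (\<lambda>y. f (y + h *\<^sub>R e)) = integral\<^sup>L lborel f"
    if "h \<in> ball 0 1" for h
  proof -
    have "integral (cbox (-a) a) (\<lambda>y. f (y + h *\<^sub>R e)) = integral\<^sup>L lborel (\<lambda>y. f (y + h *\<^sub>R e))"
      by (rule integral_cbox_compact_support[OF _ compact_cbox])
         (use that shift_supp in \<open>auto intro!: continuous_on_compose2[OF fcont] continuous_intros\<close>)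
    also have "\<dots> = integral\<^sup>L (distr lborel borel ((+) (h *\<^sub>R e))) f"
      by (subst integral_distr) (auto intro: borel_measurable_continuous_onI fcont simp: add.commute)
    finally show ?thesis
      by (simp add: lborel_distr_plus)
  qed
  have "((\<lambda>h. integral (cbox (-a) a) (\<lambda>y. f (y + h *\<^sub>R e))) has_field_derivative 0) (at 0)"
    by (rule has_field_derivative_transform_within_open[OF DERIV_const, where S="ball 0 1"])
       (use shift_const in auto)
  then have "integral (cbox (-a) a) (\<lambda>y. Df y \<bullet> e) = 0"
    using has_field_derivative_integral_shift[OF der cont] DERIV_unique by blast
  moreover have Df_supp: "Df y \<bullet> e = 0" if "y \<notin> S" for y
    using gradient_eq_0_outside_support[OF der compact_imp_closed[OF S] supp that] by simp
  moreover have "S \<subseteq> cbox (-a) a"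
    using R B subset_cball[of R "R + norm e" 0] by force
  moreover have gcont: "continuous_on UNIV (\<lambda>y. Df y \<bullet> e)"
    by (intro continuous_intros cont)
  moreover have "(\<lambda>y. Df y \<bullet> e) \<in> borel_measurable lborel"
    using borel_measurable_continuous_onI[OF gcont] by simp
  ultimately show ?thesis
    using integral_cbox_compact_support[OF gcont S Df_supp] integral_completion by metis
qed

lemma set_integrable_compact:
  fixes g :: "'a::euclidean_space \<Rightarrow> 'b::{banach, second_countable_topology}"
  assumes "continuous_on K g" "compact K"
  shows "set_integrable lebesgue K g"
  unfolding set_integrable_def
proof (rule integrable_compact_support(2)[OF _ assms(2)])
  show "continuous_on K (\<lambda>x. indicator K x *\<^sub>R g x)"
    by (rule continuous_on_eq[OF assms(1)]) simp
qed simp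

lemma weak_grad_if_has_derivative:
  fixes U :: "real^'n::finite \<Rightarrow> real" and G :: "real^'n \<Rightarrow> real^'n"
  assumes der: "\<And>y. (U has_derivative (\<lambda>h. G y \<bullet> h)) (at y)"
    and cont: "continuous_on UNIV G"
  shows "weak_grad U G"
proof -
  have Ucont: "continuous_on UNIV U"
    using has_derivative_continuous[OF der] by (simp add: continuous_on_eq_continuous_at)
  show ?thesis
    unfolding weak_grad_def
  proof (intro conjI allI impI)
    fix K :: "(real^'n) set"
    assume "compact K \<and> 0 \<notin> K"
    then have K: "compact K" ..
    show "set_integrable lebesgue K U"
      by (rule set_integrable_compact[OF continuous_on_subset[OF Ucont subset_UNIV] K])
    show "set_integrable lebesgue K G"
      by (rule set_integrable_compact[OF continuous_on_subset[OF cont subset_UNIV] K])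
  next
    fix \<phi> D\<phi> i
    assume test: "test_fn \<phi> (D\<phi> :: real^'n \<Rightarrow> real^'n)"
    define S where "S = closure {y. \<phi> y \<noteq> 0}"
    have der\<phi>: "\<And>y. (\<phi> has_derivative (\<lambda>h. D\<phi> y \<bullet> h)) (at y)"
      and D\<phi>_cont: "continuous_on UNIV D\<phi>" and S: "compact S"
      using test unfolding test_fn_def S_def by simp_all
    have \<phi>_supp: "\<phi> y = 0" if "y \<notin> S" for y
      using that closure_subset[of "{y. \<phi> y \<noteq> 0}"] unfolding S_def by blast
    have \<phi>_cont: "continuous_on UNIV \<phi>"
      using has_derivative_continuous[OF der\<phi>] by (simp add: continuous_on_eq_continuous_at)
    define Df where "Df y = U y *\<^sub>R D\<phi> y + \<phi> y *\<^sub>R G y" for y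
    have "((\<lambda>y. U y * \<phi> y) has_derivative (\<lambda>h. Df y \<bullet> h)) (at y)" for y
      using has_derivative_mult[OF der der\<phi>]
      by (simp add: Df_def inner_add_left algebra_simps)
    moreover have "continuous_on UNIV Df"
      unfolding Df_def[abs_def] by (intro continuous_intros Ucont \<phi>_cont D\<phi>_cont cont)
    ultimately have "(\<integral>y. Df y \<bullet> axis i 1 \<partial>lebesgue) = 0"
      by (rule integral_derivative_compact_support[OF _ _ S]) (simp add: \<phi>_supp)
    moreover have "D\<phi> y = 0" if "y \<notin> S" for y
      using gradient_eq_0_outside_support[OF der\<phi> _ \<phi>_supp that] by (simp add: S_def)
    then have "integrable lebesgue (\<lambda>y. U y * D\<phi> y $ i)"
      by (intro integrable_compact_support(2)[OF _ S] continuous_intros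
            continuous_on_subset[OF Ucont] continuous_on_subset[OF D\<phi>_cont]) auto
    moreover have "integrable lebesgue (\<lambda>y. G y $ i * \<phi> y)"
      using \<phi>_supp
      by (intro integrable_compact_support(2)[OF _ S] continuous_intros
            continuous_on_subset[OF \<phi>_cont] continuous_on_subset[OF cont]) auto
    ultimately show "(\<integral>y. U y * D\<phi> y $ i \<partial>lebesgue) = - (\<integral>y. G y $ i * \<phi> y \<partial>lebesgue)"
      by (simp add: Df_def inner_axis mult.commute[of "\<phi> _"])
  qed
qed

definition pos_sq :: "real \<Rightarrow> real" where
  "pos_sq x = (max 0 x)^2"

lemma has_real_derivative_pos_sq: "(pos_sq has_real_derivative 2 * max 0 x) (at x)"
proof (cases x "0::real" rule: linorder_cases)
  case less
  have "((\<lambda>_. 0) has_real_derivative 2 * max 0 x) (at x)"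
    using less by simp
  then show ?thesis
    by (rule has_field_derivative_transform_within_open[where S="{..<0}"])
       (use less in \<open>auto simp: pos_sq_def\<close>)
next
  case equal
  have "((\<lambda>h. (pos_sq (0 + h) - pos_sq 0) / h) \<longlongrightarrow> 0) (at 0)"
  proof (rule Lim_transform_eventually)
    show "((\<lambda>h. max 0 h) \<longlongrightarrow> 0) (at (0::real))"
      by (rule tendsto_eq_intros | simp)+
    show "\<forall>\<^sub>F h in at 0. max 0 h = (pos_sq (0 + h) - pos_sq 0) / h"
      unfolding eventually_at_filter by (auto simp: pos_sq_def power2_eq_square max_def)
  qed
  then show ?thesis
    using equal by (simp add: DERIV_def)
next
  case greater
  have "((\<lambda>z. z^2) has_real_derivative 2 * max 0 x) (at x)"
    using greater by (auto intro!: derivative_eq_intros)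
  then show ?thesis
    by (rule has_field_derivative_transform_within_open[where S="{0<..}"])
       (use greater in \<open>auto simp: pos_sq_def\<close>)
qed

definition annulus_bump :: "real \<Rightarrow> real" where
  "annulus_bump x = pos_sq ((x - 4) * (9 - x))"

definition annulus_bump_deriv :: "real \<Rightarrow> real" where
  "annulus_bump_deriv x = 2 * max 0 ((x - 4) * (9 - x)) * (13 - 2 * x)"

lemma has_real_derivative_annulus_bump:
  "(annulus_bump has_real_derivative annulus_bump_deriv x) (at x)"
  unfolding annulus_bump_def[abs_def] annulus_bump_deriv_def
  by (rule DERIV_chain2[OF has_real_derivative_pos_sq]) (auto intro!: derivative_eq_intros)

lemma annulus_bump_eq_0:
  assumes "x \<notin> {4<..<9}"
  shows "annulus_bump x = 0" "annulus_bump_deriv x = 0"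
proof -
  have "(x - 4) * (9 - x) \<le> 0"
    using assms by (cases "x \<le> 4") (auto intro: mult_nonpos_nonneg mult_nonneg_nonpos)
  then show "annulus_bump x = 0" "annulus_bump_deriv x = 0"
    by (simp_all add: annulus_bump_def annulus_bump_deriv_def pos_sq_def max_def)
qed

lemma annulus_bump_pos: "x \<in> {4<..<9} \<Longrightarrow> annulus_bump x > 0"
  by (auto simp: annulus_bump_def pos_sq_def max_def)

definition radial_bump :: "'a::real_inner \<Rightarrow> real" where
  "radial_bump y = annulus_bump (y \<bullet> y)"

definition radial_bump_grad :: "'a::real_inner \<Rightarrow> 'a" where
  "radial_bump_grad y = (2 * annulus_bump_deriv (y \<bullet> y)) *\<^sub>R y"

lemma has_derivative_radial_bump:
  "(radial_bump has_derivative (\<lambda>h. radial_bump_grad y \<bullet> h)) (at y)"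
proof -
  have "(radial_bump has_derivative (\<lambda>h. (y \<bullet> h + h \<bullet> y) * annulus_bump_deriv (y \<bullet> y))) (at y)"
    unfolding radial_bump_def[abs_def]
    by (rule DERIV_compose_FDERIV[OF has_real_derivative_annulus_bump])
       (auto intro!: derivative_eq_intros)
  then show ?thesis
    by (simp add: radial_bump_grad_def inner_commute algebra_simps)
qed

lemma continuous_on_radial_bump: "continuous_on A radial_bump"
  unfolding radial_bump_def annulus_bump_def pos_sq_def by (intro continuous_intros)

lemma continuous_on_radial_bump_grad: "continuous_on A radial_bump_grad"
  unfolding radial_bump_grad_def annulus_bump_deriv_def by (intro continuous_intros)

lemma radial_bump_eq_0:
  assumes "y \<notin> cball 0 3 - ball 0 2"
  shows "radial_bump y = 0" "radial_bump_grad y = 0"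
proof -
  have "norm y < 2 \<or> 3 < norm y"
    using assms by auto
  then have "(norm y)^2 < 2^2 \<or> 3^2 < (norm y)^2"
    by (meson norm_ge_zero power_strict_mono zero_le_numeral zero_less_numeral)
  then have "y \<bullet> y \<notin> {4<..<9}"
    by (auto simp: power2_norm_eq_inner)
  then show "radial_bump y = 0" "radial_bump_grad y = 0"
    by (simp_all add: radial_bump_def radial_bump_grad_def annulus_bump_eq_0)
qed

lemma weak_grad_radial_bump: "weak_grad (radial_bump :: real^'n::finite \<Rightarrow> real) radial_bump_grad"
  by (rule weak_grad_if_has_derivative[OF has_derivative_radial_bump continuous_on_radial_bump_grad])

lemma integrable_cyl_measure_compact_support:
  fixes F :: "real^'n::finite \<Rightarrow> real"
  assumes cont: "continuous_on UNIV F" and K: "compact K" "0 \<notin> K"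
    and supp: "\<And>y. y \<notin> K \<Longrightarrow> F y = 0"
  shows "integrable cyl_measure F"
proof -
  define \<rho> :: "real^'n \<Rightarrow> real" where
    "\<rho> y = (if y = 0 then 0 else 1 / (sphere_area TYPE('n) * norm y ^ CARD('n)))" for y
  have cyl: "cyl_measure = density lebesgue (\<lambda>y. ennreal (\<rho> y))"
    unfolding cyl_measure_def \<rho>_def ..
  have "continuous_on K (\<lambda>y. inverse (sphere_area TYPE('n)) * inverse (norm y ^ CARD('n)) * F y)"
    using K(2) by (intro continuous_intros continuous_on_subset[OF cont]) auto
  moreover have "inverse (sphere_area TYPE('n)) * inverse (norm y ^ CARD('n)) * F y = \<rho> y *\<^sub>R F y"
    if "y \<in> K" for y
    using that K(2) by (auto simp: \<rho>_def divide_inverse inverse_mult_distrib)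
  ultimately have "continuous_on K (\<lambda>y. \<rho> y *\<^sub>R F y)"
    by (rule continuous_on_eq)
  then have "integrable lebesgue (\<lambda>y. \<rho> y *\<^sub>R F y)"
    by (rule integrable_compact_support(2)[OF _ K(1)]) (simp add: supp)
  moreover have "F \<in> borel_measurable lebesgue"
    by (intro measurable_completion) (simp add: borel_measurable_continuous_onI[OF cont])
  moreover have "\<rho> \<in> borel_measurable lebesgue"
    unfolding \<rho>_def[abs_def] by (intro measurable_completion) measurable
  ultimately show ?thesis
    unfolding cyl by (subst integrable_density) (auto simp: \<rho>_def sphere_area_def)
qed

definition cyl_bump :: "real \<Rightarrow> real^'n::finite \<Rightarrow> real" where
  "cyl_bump s w = annulus_bump (exp (2 * s))"

lemma to_euclid_cyl_bump: "to_euclid cyl_bump = radial_bump"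
proof
  fix y :: "real^'n"
  show "to_euclid cyl_bump y = radial_bump y"
  proof (cases "y = 0")
    case True
    then show ?thesis
      by (simp add: to_euclid_def cyl_bump_def radial_bump_def annulus_bump_eq_0)
  next
    case False
    then have "exp (2 * ln (norm y)) = norm y powr 2"
      by (simp add: powr_def)
    also have "\<dots> = y \<bullet> y"
      using False by (simp add: power2_norm_eq_inner)
    finally show ?thesis
      by (simp add: to_euclid_def cyl_bump_def radial_bump_def)
  qed
qed

lemma H1_cyl_cyl_bump: "H1_cyl cyl_bump"
  unfolding H1_cyl_def to_euclid_cyl_bump
proof (intro exI conjI)
  have annulus: "compact (cball (0::real^'n) 3 - ball 0 2)" "0 \<notin> cball (0::real^'n) 3 - ball 0 2"
    by (auto intro: compact_diff)
  show "weak_grad radial_bump radial_bump_grad"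
    by (rule weak_grad_radial_bump)
  show "integrable cyl_measure (\<lambda>y::real^'n. (radial_bump y)^2)"
    by (intro integrable_cyl_measure_compact_support[OF _ annulus])
       (auto intro!: continuous_intros continuous_on_radial_bump simp: radial_bump_eq_0)
  show "integrable cyl_measure (\<lambda>y::real^'n. norm y ^ 2 * norm (radial_bump_grad y) ^ 2)"
    by (intro integrable_cyl_measure_compact_support[OF _ annulus])
       (auto intro!: continuous_intros continuous_on_radial_bump_grad simp: radial_bump_eq_0)
qed

lemma nonzero_cyl_cyl_bump: "nonzero_cyl (cyl_bump :: real \<Rightarrow> real^'n::finite \<Rightarrow> real)"
  unfolding nonzero_cyl_def to_euclid_cyl_bump
proof
  assume "AE y in lebesgue. (radial_bump :: real^'n \<Rightarrow> real) y = 0"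
  then obtain N :: "(real^'n) set"
    where N: "{y \<in> space lebesgue. radial_bump y \<noteq> 0} \<subseteq> N" "emeasure lebesgue N = 0" "N \<in> sets lebesgue"
    by (elim AE_E) blast
  define A :: "(real^'n) set" where "A = {y. 4 < y \<bullet> y \<and> y \<bullet> y < 9}"
  have "A \<subseteq> N"
    using N(1) annulus_bump_pos by (force simp: A_def radial_bump_def)
  moreover have "negligible N"
    using N(2,3) by (simp add: negligible_iff_null_sets null_setsI)
  ultimately have "negligible A"
    by (rule negligible_subset[rotated])
  moreover have "open A"
    unfolding A_def by (intro open_Collect_conj open_Collect_less continuous_intros)
  moreover obtain i :: 'n where True by simp
  then have "(5/2) *\<^sub>R axis i 1 \<in> A"
    by (simp add: A_def inner_axis_axis)
  ultimately show False
    using open_not_negligible by blast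
qed

lemma s_only_cyl_bump: "s_only cyl_bump"
  unfolding s_only_def cyl_bump_def by simp

lemma Youngs_inequality_scaled:
  fixes \<theta> k x y :: real
  assumes "0 < \<theta>" "\<theta> \<le> 1" "0 < k" "0 < x" "0 < y"
  shows "x powr \<theta> * y powr (1 - \<theta>) \<le> k powr \<theta> * (\<theta> * x / k + (1 - \<theta>) * y)"
proof -
  have "(x / k) powr \<theta> * y powr (1 - \<theta>) \<le> \<theta> * (x / k) + (1 - \<theta>) * y"
    using assms by (intro Youngs_inequality_0) auto
  then have "k powr \<theta> * ((x / k) powr \<theta> * y powr (1 - \<theta>)) \<le> k powr \<theta> * (\<theta> * (x / k) + (1 - \<theta>) * y)"
    by (intro mult_left_mono) auto
  then show ?thesis
    using assms by (simp add: powr_divide)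
qed

lemma Lnorm_nonneg: "0 \<le> Lnorm q u"
  by (simp add: Lnorm_def)

lemma grad_sq_nonneg: "0 \<le> grad_sq u"
  unfolding grad_sq_def by (rule integral_nonneg_AE) simp

lemma QCKN_nonneg: "0 \<le> QCKN \<theta> p \<Lambda> u"
  by (simp add: QCKN_def)

lemma QCKN_altdef:
  assumes "0 < Lnorm 2 u"
  shows "QCKN \<theta> p \<Lambda> u =
    (grad_sq u + \<Lambda> * (Lnorm 2 u)^2) powr \<theta> * ((Lnorm 2 u)^2) powr (1 - \<theta>) / (Lnorm p u)^2"
proof -
  have "Lnorm 2 u powr (2 * (1 - \<theta>)) = (Lnorm 2 u powr 2) powr (1 - \<theta>)"
    by (simp only: powr_powr)
  then have "Lnorm 2 u powr (2 * (1 - \<theta>)) = ((Lnorm 2 u)^2) powr (1 - \<theta>)"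
    using assms by (simp add: powr_numeral)
  then show ?thesis
    by (simp add: QCKN_def)
qed

lemma QCKN_le_QCKN_1:
  assumes \<theta>: "0 < \<theta>" "\<theta> \<le> 1" and k: "0 < k" and \<Lambda>: "0 < \<Lambda>"
    and \<mu>: "\<theta> * \<Lambda> + (1 - \<theta>) * k = \<theta> * \<mu>"
  shows "QCKN \<theta> p \<Lambda> w \<le> \<theta> * k powr (\<theta> - 1) * QCKN 1 p \<mu> w"
proof (cases "Lnorm 2 w = 0")
  case True
  then show ?thesis
    using \<theta> QCKN_nonneg[of 1 p \<mu> w] by (simp add: QCKN_def)
next
  case False
  then have L: "0 < Lnorm 2 w"
    using Lnorm_nonneg[of 2 w] by linarith
  define a b c where "a = grad_sq w" and "b = (Lnorm 2 w)^2" and "c = (Lnorm p w)^2"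
  have b: "0 < b" and a: "0 \<le> a"
    using L grad_sq_nonneg by (auto simp: a_def b_def)
  have "0 < \<theta> * \<mu>"
    using \<mu> \<theta> k \<Lambda> by (smt (verit) mult_pos_pos mult_nonneg_nonneg)
  then have "0 < \<mu>"
    using \<theta> by (simp add: zero_less_mult_iff)
  have "(a + \<Lambda> * b) powr \<theta> * b powr (1 - \<theta>) \<le> k powr \<theta> * (\<theta> * (a + \<Lambda> * b) / k + (1 - \<theta>) * b)"
    using \<theta> k \<Lambda> a b by (intro Youngs_inequality_scaled) (auto intro: add_nonneg_pos)
  also have "\<dots> = \<theta> * k powr (\<theta> - 1) * (a + \<mu> * b)"
  proof -
    have "k powr \<theta> * (\<theta> * (a + \<Lambda> * b) / k + (1 - \<theta>) * b)
        = k powr \<theta> / k * (\<theta> * a + (\<theta> * \<Lambda> + (1 - \<theta>) * k) * b)"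
      using k by (simp add: field_simps)
    also have "\<dots> = k powr \<theta> / k * (\<theta> * a + \<theta> * \<mu> * b)"
      unfolding \<mu> ..
    finally show ?thesis
      using k by (simp add: powr_diff field_simps)
  qed
  finally have "(a + \<Lambda> * b) powr \<theta> * b powr (1 - \<theta>) / c \<le> \<theta> * k powr (\<theta> - 1) * (a + \<mu> * b) / c"
    by (rule divide_right_mono) (simp add: c_def)
  then show ?thesis
    using L QCKN_altdef[of w \<theta> p \<Lambda>] QCKN_altdef[of w 1 p \<mu>] \<open>0 < \<mu>\<close> a b
    by (simp add: a_def b_def c_def)
qed

lemma QCKN_eq_QCKN_1:
  assumes \<theta>: "0 < \<theta>" and L: "0 < Lnorm 2 u"
    and k: "k = grad_sq u / (Lnorm 2 u)^2 + \<Lambda>" "0 < k"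
    and \<mu>: "\<theta> * \<Lambda> + (1 - \<theta>) * k = \<theta> * \<mu>"
  shows "QCKN \<theta> p \<Lambda> u = \<theta> * k powr (\<theta> - 1) * QCKN 1 p \<mu> u"
proof -
  define b c where "b = (Lnorm 2 u)^2" and "c = (Lnorm p u)^2"
  have b: "0 < b"
    using L by (simp add: b_def)
  have a: "grad_sq u = (k - \<Lambda>) * b"
    using b by (simp add: k(1) b_def)
  then have \<Lambda>b: "grad_sq u + \<Lambda> * b = k * b"
    by (simp add: algebra_simps)
  have "\<theta> * (grad_sq u + \<mu> * b) = \<theta> * (k - \<Lambda> + \<mu>) * b"
    unfolding a by (simp add: algebra_simps)
  also have "\<theta> * (k - \<Lambda> + \<mu>) = k"
    using \<mu> by (simp add: algebra_simps)
  finally have \<mu>b: "grad_sq u + \<mu> * b = k / \<theta> * b"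
    using \<theta> by (simp add: field_simps)
  have "QCKN \<theta> p \<Lambda> u = (k * b) powr \<theta> * b powr (1 - \<theta>) / c"
    using \<Lambda>b unfolding QCKN_altdef[OF L] b_def c_def by simp
  also have "\<dots> = k powr \<theta> * (b powr \<theta> * b powr (1 - \<theta>)) / c"
    using k(2) b by (simp add: powr_mult)
  also have "b powr \<theta> * b powr (1 - \<theta>) = b"
    using b by (simp add: powr_add[symmetric])
  also have "k powr \<theta> * b / c = \<theta> * k powr (\<theta> - 1) * (k / \<theta> * b / c)"
    using \<theta> k(2) by (simp add: powr_diff field_simps)
  also have "k / \<theta> * b / c = QCKN 1 p \<mu> u"
    using \<mu>b \<theta> k(2) b unfolding QCKN_altdef[OF L] b_def c_def by simp
  finally show ?thesis .
qed

text \<open>In the degenerate case \<open>Lnorm 2 u = 0\<close> the quotient \<open>QCKN 1 p \<mu> u\<close> vanishes,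
  since \<open>0 powr 0 = 0\<close> in Isabelle.\<close>

lemma QCKN_1_le_if_QCKN_le:
  assumes \<theta>: "0 < \<theta>" "\<theta> \<le> 1" and \<Lambda>: "0 < \<Lambda>"
    and t: "t = grad_sq u / (Lnorm 2 u)^2"
    and \<mu>: "\<theta> * \<mu> = (1 - \<theta>) * t + \<Lambda>"
    and le: "QCKN \<theta> p \<Lambda> u \<le> QCKN \<theta> p \<Lambda> w"
  shows "QCKN 1 p \<mu> u \<le> QCKN 1 p \<mu> w"
proof (cases "Lnorm 2 u = 0")
  case True
  then show ?thesis
    using QCKN_nonneg[of 1 p \<mu> w] by (simp add: QCKN_def)
next
  case False
  then have L: "0 < Lnorm 2 u"
    using Lnorm_nonneg[of 2 u] by linarith
  define k where "k = t + \<Lambda>"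
  have "0 \<le> t"
    using grad_sq_nonneg[of u] by (simp add: t)
  then have k: "0 < k"
    using \<Lambda> by (simp add: k_def)
  have \<mu>k: "\<theta> * \<Lambda> + (1 - \<theta>) * k = \<theta> * \<mu>"
    using \<mu> by (simp add: k_def algebra_simps)
  have "\<theta> * k powr (\<theta> - 1) * QCKN 1 p \<mu> u = QCKN \<theta> p \<Lambda> u"
    using QCKN_eq_QCKN_1[OF \<theta>(1) L _ k \<mu>k] by (simp add: k_def t)
  also have "\<dots> \<le> QCKN \<theta> p \<Lambda> w"
    by (rule le)
  also have "\<dots> \<le> \<theta> * k powr (\<theta> - 1) * QCKN 1 p \<mu> w"
    by (rule QCKN_le_QCKN_1[OF \<theta> k \<Lambda> \<mu>k])
  finally show ?thesis
    using \<theta> k by (simp add: mult_le_cancel_left_pos)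
qed

lemma KCKN_le_QCKN:
  fixes w :: "real \<Rightarrow> real^'n::finite \<Rightarrow> real"
  assumes "H1_cyl w" "nonzero_cyl w"
  shows "KCKN TYPE('n) \<theta> p \<Lambda> \<le> QCKN \<theta> p \<Lambda> w"
  unfolding KCKN_def using assms
  by (intro cINF_lower bdd_belowI2[where m=0] QCKN_nonneg) auto

theorem proposition1:
  fixes u :: "real \<Rightarrow> real^'n::finite \<Rightarrow> real"
    and p \<theta> \<Lambda> \<mu> t :: real
  assumes "CARD('n) \<ge> 2"
    and "subcritical CARD('n) p"
    and "vartheta p CARD('n) \<le> \<theta>" and "\<theta> \<le> 1"
    and "\<Lambda> > 0"
    and "H1_cyl u" and "nonzero_cyl u"
    and "QCKN \<theta> p \<Lambda> u = KCKN TYPE('n) \<theta> p \<Lambda>"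
    and "t = grad_sq u / (Lnorm 2 u)^2"
    and "(Lnorm 2 u)^2 = \<theta> / (t + \<Lambda>) * (Lnorm p u) powr p"
    and "\<theta> * \<mu> = (1 - \<theta>) * t + \<Lambda>"
    and "weak_solution \<mu> p u"
  shows "QCKN 1 p \<mu> u \<le> KCKN_star TYPE('n) 1 p \<mu>"
proof -
  have "0 < vartheta p CARD('n)"
    using assms(1,2) by (simp add: vartheta_def subcritical_def)
  then have \<theta>: "0 < \<theta>"
    using assms(3) by linarith
  have "QCKN 1 p \<mu> u \<le> QCKN 1 p \<mu> w" if "H1_cyl w" "nonzero_cyl w" for w :: "real \<Rightarrow> real^'n \<Rightarrow> real"
    using KCKN_le_QCKN[OF that, of \<theta> p \<Lambda>] assms(8)
    by (intro QCKN_1_le_if_QCKN_le[OF \<theta> assms(4,5,9,11)]) simp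
  moreover have "cyl_bump \<in> {w :: real \<Rightarrow> real^'n \<Rightarrow> real. H1_cyl w \<and> nonzero_cyl w \<and> s_only w}"
    using H1_cyl_cyl_bump nonzero_cyl_cyl_bump s_only_cyl_bump by blast
  ultimately show ?thesis
    unfolding KCKN_star_def by (intro cINF_greatest) auto
qed

end
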